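(* Let $\varepsilon>0$ and let $\lambda:[0,\infty)\to[0,\infty)$ be a BS density function. For a 1-D SCS with BS density function $\nu$, denote by $\left.\frac{C}{I}\right|_{\nu(r)}$ the random variable $\frac{R_1^{-\varepsilon}}{\sum_{i=2}^\infty R_i^{-\varepsilon}}$, where $R_1\le R_2\le\cdots$ are the ordered points of a Poisson point process on $[0,\infty)$ with intensity $\nu$. Then for every $a>0$, $$\left.\frac{C}{I}\right|_{\lambda(r)}=_{\mathrm{st}}\left.\frac{C}{I}\right|_{\frac1a\lambda(\frac ra)},$$ i.e. the two random variables have the same distribution.
   Context: A 1-D shotgun cellular system (SCS) with BS density function $\lambda(r)$ is a Poisson point process on $[0,\infty)$ with intensity $\lambda$, whose points are distances of base stations from a mobile station at the origin; all BSs have unit transmission power and unit shadow fading, path loss is $R^{-\varepsilon}$, and the mobile is served by the nearest BS, so the carrier-to-interference ratio is $\frac{C}{I}=\frac{R_1^{-\varepsilon}}{\sum_{i\ge2}R_i^{-\varepsilon}}$. For random variables $X,Y$, $X=_{\mathrm{st}}Y$ means $\mathbb P(X>x)=\mathbb P(Y>x)$ for all real $x$. *)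

theory Defs
  imports "HOL-Probability.Probability"
begin

definition bs_density :: "(real \<Rightarrow> real) \<Rightarrow> bool" where
  "bs_density lam \<longleftrightarrow> lam \<in> borel_measurable borel \<and> (\<forall>r\<ge>0. lam r \<ge> 0)"

definition intensity_measure :: "(real \<Rightarrow> real) \<Rightarrow> real set \<Rightarrow> ennreal" where
  "intensity_measure lam A =
     (\<integral>\<^sup>+ x. indicator (A \<inter> {0..}) x * ennreal (lam x) \<partial>lborel)"

definition num_points :: "(nat \<Rightarrow> 'a \<Rightarrow> real) \<Rightarrow> 'a \<Rightarrow> real set \<Rightarrow> ennreal" where
  "num_points R \<omega> A = emeasure (count_space UNIV) {i. R i \<omega> \<in> A}"

definition is_PPP :: "'a measure \<Rightarrow> (real \<Rightarrow> real) \<Rightarrow> (nat \<Rightarrow> 'a \<Rightarrow> real) \<Rightarrow> bool" where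
  "is_PPP M lam R \<longleftrightarrow>
     (\<forall>\<omega>\<in>space M. (\<forall>i. 0 \<le> R i \<omega>) \<and> incseq (\<lambda>i. R i \<omega>)) \<and>
     (\<forall>i. R i \<in> borel_measurable M) \<and>
     (\<forall>A. A \<in> sets borel \<and> A \<subseteq> {0..} \<longrightarrow>
        (\<lambda>\<omega>. num_points R \<omega> A) \<in> borel_measurable M \<and>
        (intensity_measure lam A < \<infinity> \<longrightarrow>
           (\<forall>k::nat. measure M {\<omega>\<in>space M. num_points R \<omega> A = of_nat k}
              = exp (- enn2real (intensity_measure lam A))
                * enn2real (intensity_measure lam A) ^ k / fact k)) \<and>
        (intensity_measure lam A = \<infinity> \<longrightarrow>
           (AE \<omega> in M. num_points R \<omega> A = \<infinity>))) \<and>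
     (\<forall>(I::nat set) A. finite I \<and> disjoint_family_on A I \<and>
        (\<forall>i\<in>I. A i \<in> sets borel \<and> A i \<subseteq> {0..}) \<longrightarrow>
        prob_space.indep_vars M (\<lambda>_. borel) (\<lambda>i \<omega>. num_points R \<omega> (A i)) I)"

definition CI_ratio :: "real \<Rightarrow> (nat \<Rightarrow> 'a \<Rightarrow> real) \<Rightarrow> 'a \<Rightarrow> ereal" where
  "CI_ratio eps R \<omega> =
     enn2ereal (ennreal (R 0 \<omega> powr (- eps)) / (\<Sum>i. ennreal (R (Suc i) \<omega> powr (- eps))))"

end

theory Submission
  imports Defs "HOL-Library.Nat_Bijection"
begin

text \<open>Dividing all points of a Poisson process with intensity \<open>(1/a) \<lambda>(r/a)\<close> by \<open>a\<close> gives a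
  Poisson process with intensity \<open>\<lambda>\<close> (change of variables in the intensity measure), and C/I is
  invariant under this rescaling because the carrier and every interference term pick up the same
  factor \<open>a\<^sup>\<epsilon>\<close>. It remains to show that the law of the ordered points is determined by the
  intensity. Since \<open>R\<^sub>j \<le> t\<close> iff at least \<open>j + 1\<close> points lie in \<open>[0, t]\<close>, the lower orthants,
  which generate the product \<sigma>-algebra, have probabilities given by the joint law of the counts
  of finitely many sets. Those counts are sums of the counts of the cells of their Venn diagram,
  which are independent with Poisson laws fixed by the intensity.\<close>

lemma distr_eq_countable_support:
  fixes X :: "'a \<Rightarrow> 'c::t1_space" and Y :: "'b \<Rightarrow> 'c"
  assumes X: "X \<in> borel_measurable M" and Y: "Y \<in> borel_measurable M'"
    and S: "countable S" and AE_X: "AE \<omega> in M. X \<omega> \<in> S" and AE_Y: "AE \<omega> in M'. Y \<omega> \<in> S"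
    and eq: "\<And>s. s \<in> S \<Longrightarrow> emeasure M {\<omega>\<in>space M. X \<omega> = s} = emeasure M' {\<omega>\<in>space M'. Y \<omega> = s}"
  shows "distr M borel X = distr M' borel Y"
proof -
  have S_borel: "S \<in> sets borel"
    by (rule sets.countable[OF _ S]) (simp add: borel_closed)
  have distr_eq_sum: "emeasure (distr N borel Z) B
      = (\<integral>\<^sup>+s. emeasure N {\<omega>\<in>space N. Z \<omega> = s} \<partial>count_space (B \<inter> S))"
    if Z: "Z \<in> borel_measurable N" and AE_Z: "AE \<omega> in N. Z \<omega> \<in> S" and B: "B \<in> sets borel"
    for N :: "'d measure" and Z B
  proof -
    have "AE s in distr N borel Z. s \<in> S"
      using AE_Z Z S_borel by (subst AE_distr_iff) auto
    then have "emeasure (distr N borel Z) B = emeasure (distr N borel Z) (B \<inter> S)"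
      using B S_borel by (intro emeasure_eq_AE) auto
    also have "\<dots> = (\<integral>\<^sup>+s. emeasure (distr N borel Z) {s} \<partial>count_space (B \<inter> S))"
      using S B by (intro emeasure_countable_singleton) (auto intro: borel_closed)
    also have "\<dots> = (\<integral>\<^sup>+s. emeasure N {\<omega>\<in>space N. Z \<omega> = s} \<partial>count_space (B \<inter> S))"
      using Z by (intro nn_integral_cong) (simp add: emeasure_distr borel_closed vimage_def Int_def conj_commute)
    finally show ?thesis .
  qed
  show ?thesis
  proof (rule measure_eqI)
    fix B assume "B \<in> sets (distr M borel X)"
    then have B: "B \<in> sets borel" by simp
    show "emeasure (distr M borel X) B = emeasure (distr M' borel Y) B"
      unfolding distr_eq_sum[OF X AE_X B] distr_eq_sum[OF Y AE_Y B]
      by (intro nn_integral_cong) (simp add: eq)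
  qed simp
qed

lemma
  assumes "is_PPP M lam R"
  shows PPP_nonneg: "\<omega> \<in> space M \<Longrightarrow> 0 \<le> R i \<omega>"
    and PPP_incseq: "\<omega> \<in> space M \<Longrightarrow> incseq (\<lambda>i. R i \<omega>)"
    and PPP_measurable: "R i \<in> borel_measurable M"
  using assms by (simp_all add: is_PPP_def)

lemma
  assumes "is_PPP M lam R" and "A \<in> sets borel" and "A \<subseteq> {0..}"
  shows PPP_num_points_measurable: "(\<lambda>\<omega>. num_points R \<omega> A) \<in> borel_measurable M"
    and PPP_num_points_poisson: "intensity_measure lam A < \<infinity> \<Longrightarrow>
      measure M {\<omega>\<in>space M. num_points R \<omega> A = of_nat k}
        = exp (- enn2real (intensity_measure lam A)) * enn2real (intensity_measure lam A) ^ k / fact k"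
    and PPP_num_points_infinite: "intensity_measure lam A = \<infinity> \<Longrightarrow>
      AE \<omega> in M. num_points R \<omega> A = \<infinity>"
  using assms(1) unfolding is_PPP_def by (elim conjE allE[of _ A]; simp add: assms(2,3))+

lemma PPP_indep_num_points:
  fixes I :: "nat set"
  assumes "is_PPP M lam R" and "finite I" and "disjoint_family_on A I"
    and "\<And>i. i \<in> I \<Longrightarrow> A i \<in> sets borel \<and> A i \<subseteq> {0..}"
  shows "prob_space.indep_vars M (\<lambda>_. borel) (\<lambda>i \<omega>. num_points R \<omega> (A i)) I"
  using assms unfolding is_PPP_def by (elim conjE) (simp add: assms(2-))

lemma PPP_points_measurable:
  assumes "is_PPP M lam R"
  shows "(\<lambda>\<omega> i. R i \<omega>) \<in> measurable M (PiM UNIV (\<lambda>_. borel))"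
proof -
  have "(\<lambda>\<omega>. \<lambda>i\<in>UNIV. R i \<omega>) \<in> measurable M (PiM UNIV (\<lambda>_. borel))"
    using PPP_measurable[OF assms] by (intro measurable_restrict)
  then show ?thesis
    unfolding restrict_UNIV .
qed

lemma PPP_num_points_AE_finite:
  assumes "prob_space M" and R: "is_PPP M lam R" and A: "A \<in> sets borel" "A \<subseteq> {0..}"
    and finite: "intensity_measure lam A < \<infinity>"
  shows "AE \<omega> in M. num_points R \<omega> A \<in> range of_nat"
proof -
  interpret prob_space M by fact
  let ?m = "enn2real (intensity_measure lam A)"
  let ?E = "\<lambda>k::nat. {\<omega>\<in>space M. num_points R \<omega> A = of_nat k}"
  have [measurable]: "(\<lambda>\<omega>. num_points R \<omega> A) \<in> borel_measurable M"
    using R A by (rule PPP_num_points_measurable)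
  have "(\<lambda>k. prob (?E k)) sums prob (\<Union>k. ?E k)"
    by (intro finite_measure_UNION) (auto simp: disjoint_family_on_def)
  moreover have "(\<lambda>k. prob (?E k)) sums (exp (- ?m) * exp ?m)"
    unfolding PPP_num_points_poisson[OF R A finite]
    using sums_mult[OF exp_converges[of ?m], of "exp (- ?m)"] by (simp add: divide_inverse ac_simps)
  ultimately have "prob (\<Union>k. ?E k) = 1"
    by (simp add: sums_unique2 mult_exp_exp)
  then have "AE \<omega> in M. \<omega> \<in> (\<Union>k. ?E k)"
    by (rule AE_prob_1)
  then show ?thesis
    by eventually_elim auto
qed

lemma PPP_distr_num_points_eq:
  assumes P: "prob_space M" and R: "is_PPP M lam R"
    and P': "prob_space M'" and Q: "is_PPP M' lam Q"
    and A: "A \<in> sets borel" "A \<subseteq> {0..}"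
  shows "distr M borel (\<lambda>\<omega>. num_points R \<omega> A) = distr M' borel (\<lambda>\<omega>. num_points Q \<omega> A)"
proof (cases "intensity_measure lam A < \<infinity>")
  case True
  show ?thesis
  proof (rule distr_eq_countable_support)
    show "countable (range (of_nat :: nat \<Rightarrow> ennreal))"
      by simp
    fix s assume "s \<in> (range of_nat :: ennreal set)"
    then obtain k where s: "s = of_nat k" by auto
    show "emeasure M {\<omega>\<in>space M. num_points R \<omega> A = s} = emeasure M' {\<omega>\<in>space M'. num_points Q \<omega> A = s}"
      using PPP_num_points_poisson[OF R A True] PPP_num_points_poisson[OF Q A True]
      by (simp add: s finite_measure.emeasure_eq_measure[OF prob_space.finite_measure, OF P]
          finite_measure.emeasure_eq_measure[OF prob_space.finite_measure, OF P'])
  qed (use PPP_num_points_measurable[OF R A] PPP_num_points_measurable[OF Q A]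
           PPP_num_points_AE_finite[OF P R A True] PPP_num_points_AE_finite[OF P' Q A True] in auto)
next
  case False
  then have infinite: "intensity_measure lam A = \<infinity>"
    by (simp add: less_top[symmetric])
  have "emeasure N {\<omega>\<in>space N. num_points Z \<omega> A = \<infinity>} = 1"
    if "prob_space N" "is_PPP N lam Z" for N :: "'c measure" and Z
    using PPP_num_points_infinite[OF that(2) A infinite] PPP_num_points_measurable[OF that(2) A]
    by (intro prob_space.emeasure_eq_1_AE[OF that(1)]) auto
  from this[OF P R] this[OF P' Q] show ?thesis
    by (intro distr_eq_countable_support[where S = "{\<infinity>}"]
          PPP_num_points_measurable[OF R A] PPP_num_points_measurable[OF Q A])
       (use PPP_num_points_infinite[OF R A infinite] PPP_num_points_infinite[OF Q A infinite] in auto)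
qed

lemma intensity_measure_scale:
  assumes a: "a > 0" and lam: "lam \<in> borel_measurable borel" and A: "A \<in> sets borel"
  shows "intensity_measure (\<lambda>r. (1 / a) * lam (r / a)) ((\<lambda>x. x / a) -` A) = intensity_measure lam A"
proof -
  let ?f = "\<lambda>x. indicator (A \<inter> {0..}) x * ennreal (lam x)"
  have [measurable]: "?f \<in> borel_measurable borel"
    using A lam by measurable
  have "intensity_measure (\<lambda>r. (1 / a) * lam (r / a)) ((\<lambda>x. x / a) -` A)
      = (\<integral>\<^sup>+x. ennreal (1 / a) * ?f (x / a) \<partial>lborel)"
    unfolding intensity_measure_def using a
    by (intro nn_integral_cong) (auto simp: indicator_def ennreal_mult'[symmetric] zero_le_divide_iff)
  also have "\<dots> = ennreal a * (\<integral>\<^sup>+x. ennreal (1 / a) * ?f x \<partial>lborel)"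
    using a by (subst nn_integral_real_affine[where c = a and t = 0]) (auto simp: ennreal_mult'[symmetric])
  also have "\<dots> = ennreal a * ennreal (1 / a) * intensity_measure lam A"
    by (subst nn_integral_cmult) (simp_all add: intensity_measure_def mult.assoc)
  also have "ennreal a * ennreal (1 / a) = 1"
    using a by (simp add: ennreal_mult'[symmetric])
  finally show ?thesis by simp
qed

lemma num_points_scale:
  "num_points (\<lambda>i \<omega>. R i \<omega> / a) \<omega> A = num_points R \<omega> ((\<lambda>x. x / a) -` A)"
  by (simp add: num_points_def)

lemma is_PPP_scale:
  assumes a: "a > 0" and lam: "lam \<in> borel_measurable borel"
    and R: "is_PPP M (\<lambda>r. (1 / a) * lam (r / a)) R"
  shows "is_PPP M lam (\<lambda>i \<omega>. R i \<omega> / a)"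
proof -
  let ?s = "\<lambda>A. (\<lambda>x. x / a) -` A"
  have scaled: "?s A \<in> sets borel" "?s A \<subseteq> {0..}" if "A \<in> sets borel" "A \<subseteq> {0..}" for A
  proof -
    show "?s A \<in> sets borel"
      using that(1) by (intro measurable_sets_borel) auto
    show "?s A \<subseteq> {0..}"
      using that(2) a by (auto simp: zero_le_divide_iff)
  qed
  note intensity = intensity_measure_scale[OF a lam]
  show ?thesis
    unfolding is_PPP_def num_points_scale
  proof (intro conjI ballI allI impI)
    fix \<omega> i assume "\<omega> \<in> space M"
    then show "0 \<le> R i \<omega> / a" "incseq (\<lambda>i. R i \<omega> / a)"
      using a PPP_nonneg[OF R] PPP_incseq[OF R] by (auto simp: incseq_def divide_right_mono)
  next
    fix i show "(\<lambda>\<omega>. R i \<omega> / a) \<in> borel_measurable M"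
      using PPP_measurable[OF R] by measurable
  next
    fix A :: "real set" assume "A \<in> sets borel \<and> A \<subseteq> {0..}"
    then have A: "A \<in> sets borel" "A \<subseteq> {0..}" by auto
    show "(\<lambda>\<omega>. num_points R \<omega> (?s A)) \<in> borel_measurable M"
      using R scaled[OF A] by (rule PPP_num_points_measurable)
    show "measure M {\<omega>\<in>space M. num_points R \<omega> (?s A) = of_nat k}
        = exp (- enn2real (intensity_measure lam A)) * enn2real (intensity_measure lam A) ^ k / fact k"
      if "intensity_measure lam A < \<infinity>" for k
      using PPP_num_points_poisson[OF R scaled[OF A], unfolded intensity[OF A(1)]] that by simp
    show "AE \<omega> in M. num_points R \<omega> (?s A) = \<infinity>" if "intensity_measure lam A = \<infinity>"
      using PPP_num_points_infinite[OF R scaled[OF A], unfolded intensity[OF A(1)]] that by simp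
  next
    fix I :: "nat set" and A :: "nat \<Rightarrow> real set"
    assume "finite I \<and> disjoint_family_on A I \<and> (\<forall>i\<in>I. A i \<in> sets borel \<and> A i \<subseteq> {0..})"
    then show "prob_space.indep_vars M (\<lambda>_. borel) (\<lambda>i \<omega>. num_points R \<omega> (?s (A i))) I"
      by (intro PPP_indep_num_points[OF R]) (auto simp: disjoint_family_on_def scaled)
  qed
qed

definition venn_cell :: "(nat \<Rightarrow> real set) \<Rightarrow> nat set \<Rightarrow> nat set \<Rightarrow> real set" where
  "venn_cell A J T = {x. 0 \<le> x \<and> (\<forall>j\<in>J. x \<in> A j \<longleftrightarrow> j \<in> T)}"

lemma venn_cell_sets:
  assumes "finite J" and [measurable]: "\<And>j. A j \<in> sets borel"
  shows "venn_cell A J T \<in> sets borel"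
proof -
  have "venn_cell A J T = {x\<in>space borel. 0 \<le> x \<and> (\<forall>j\<in>J \<inter> T. x \<in> A j) \<and> (\<forall>j\<in>J - T. x \<notin> A j)}"
    by (auto simp: venn_cell_def)
  also have "\<dots> \<in> sets borel"
    using \<open>finite J\<close> by measurable
  finally show ?thesis .
qed

lemma venn_cell_nonneg: "venn_cell A J T \<subseteq> {0..}"
  by (auto simp: venn_cell_def)

lemma venn_cell_disjoint:
  assumes "T \<subseteq> J" and "T' \<subseteq> J" and "T \<noteq> T'"
  shows "venn_cell A J T \<inter> venn_cell A J T' = {}"
proof (rule ccontr)
  assume "venn_cell A J T \<inter> venn_cell A J T' \<noteq> {}"
  then obtain x where "\<forall>j\<in>J. j \<in> T \<longleftrightarrow> j \<in> T'"
    by (auto simp: venn_cell_def)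
  with assms show False
    by auto
qed

lemma num_points_eq_sum_venn_cells:
  assumes "finite J" and "j \<in> J" and "A j \<subseteq> {0..}"
  shows "num_points R \<omega> (A j) = (\<Sum>T\<in>{T\<in>Pow J. j \<in> T}. num_points R \<omega> (venn_cell A J T))"
proof -
  have "{i. R i \<omega> \<in> A j} = (\<Union>T\<in>{T\<in>Pow J. j \<in> T}. {i. R i \<omega> \<in> venn_cell A J T})"
  proof (intro equalityI subsetI)
    fix i assume i: "i \<in> {i. R i \<omega> \<in> A j}"
    then have "R i \<omega> \<in> venn_cell A J {j'\<in>J. R i \<omega> \<in> A j'}"
      using assms by (auto simp: venn_cell_def)
    with i assms(2) show "i \<in> (\<Union>T\<in>{T\<in>Pow J. j \<in> T}. {i. R i \<omega> \<in> venn_cell A J T})"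
      by (intro UN_I[of "{j'\<in>J. R i \<omega> \<in> A j'}"]) auto
  qed (use assms(2) in \<open>auto simp: venn_cell_def\<close>)
  moreover have "disjoint_family_on (\<lambda>T. {i. R i \<omega> \<in> venn_cell A J T}) {T\<in>Pow J. j \<in> T}"
    unfolding disjoint_family_on_def
  proof (intro ballI impI)
    fix T T' assume "T \<in> {T\<in>Pow J. j \<in> T}" "T' \<in> {T\<in>Pow J. j \<in> T}" "T \<noteq> T'"
    then have "venn_cell A J T \<inter> venn_cell A J T' = {}"
      by (intro venn_cell_disjoint) auto
    then show "{i. R i \<omega> \<in> venn_cell A J T} \<inter> {i. R i \<omega> \<in> venn_cell A J T'} = {}"
      by blast
  qed
  ultimately show ?thesis
    using assms(1) unfolding num_points_def by (simp add: sum_emeasure)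
qed

lemma disjoint_family_on_encoded_venn_cells:
  assumes "finite J"
  shows "disjoint_family_on (\<lambda>k. venn_cell A J (set_decode k)) (set_encode ` Pow J)"
  unfolding disjoint_family_on_def
proof (intro ballI impI)
  fix k k' assume "k \<in> set_encode ` Pow J" "k' \<in> set_encode ` Pow J" "k \<noteq> k'"
  then obtain T T' where "T \<subseteq> J" "T' \<subseteq> J" "T \<noteq> T'" "k = set_encode T" "k' = set_encode T'"
    by blast
  with assms show "venn_cell A J (set_decode k) \<inter> venn_cell A J (set_decode k') = {}"
    by (simp add: set_encode_inverse finite_subset venn_cell_disjoint)
qed

text \<open>The cells are indexed through \<open>set_encode\<close> because the independence axiom of \<open>is_PPP\<close>
  is stated for families indexed by natural numbers.\<close>

lemma distr_num_points_vector_eq_sum_venn_cells: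
  fixes J :: "nat set"
  assumes P: "prob_space M" and R: "is_PPP M lam R" and J: "finite J"
    and A: "\<And>j. A j \<in> sets borel" and A0: "\<And>j. A j \<subseteq> {0..}"
  shows "distr M (PiM J (\<lambda>_. borel)) (\<lambda>\<omega>. \<lambda>j\<in>J. num_points R \<omega> (A j)) =
    distr (PiM (set_encode ` Pow J) (\<lambda>k. distr M borel (\<lambda>\<omega>. num_points R \<omega> (venn_cell A J (set_decode k)))))
      (PiM J (\<lambda>_. borel)) (\<lambda>g. \<lambda>j\<in>J. \<Sum>T\<in>{T\<in>Pow J. j \<in> T}. g (set_encode T))"
proof -
  define K where "K = set_encode ` Pow J"
  define X where "X k \<omega> = num_points R \<omega> (venn_cell A J (set_decode k))" for k \<omega>
  define V where "V = (\<lambda>\<omega>. \<lambda>k\<in>K. X k \<omega>)"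
  define G where "G g = (\<lambda>j\<in>J. \<Sum>T\<in>{T\<in>Pow J. j \<in> T}. g (set_encode T))" for g :: "nat \<Rightarrow> ennreal"
  have decode_encode: "set_decode (set_encode T) = T" if "T \<subseteq> J" for T
    using J that by (simp add: set_encode_inverse finite_subset)
  have X_measurable: "X k \<in> borel_measurable M" for k
    unfolding X_def using R venn_cell_sets[OF J A] venn_cell_nonneg by (rule PPP_num_points_measurable)
  then have V_measurable: "V \<in> measurable M (PiM K (\<lambda>_. borel))"
    unfolding V_def by (intro measurable_restrict)
  have G_measurable: "G \<in> measurable (PiM K (\<lambda>_. borel)) (PiM J (\<lambda>_. borel))"
    unfolding G_def
  proof (intro measurable_restrict borel_measurable_sum)
    fix j T assume "T \<in> {T\<in>Pow J. j \<in> T}"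
    then have "set_encode T \<in> K" unfolding K_def by blast
    then show "(\<lambda>g::nat \<Rightarrow> ennreal. g (set_encode T)) \<in> borel_measurable (PiM K (\<lambda>_. borel))"
      by (rule measurable_component_singleton)
  qed
  have "prob_space.indep_vars M (\<lambda>_. borel) X K"
    unfolding X_def K_def using J venn_cell_sets[OF J A] venn_cell_nonneg
    by (intro PPP_indep_num_points[OF R] disjoint_family_on_encoded_venn_cells) auto
  then have distr_cells: "distr M (PiM K (\<lambda>_. borel)) V = PiM K (\<lambda>k. distr M borel (X k))"
    using prob_space.indep_vars_iff_distr_eq_PiM[OF P, where I = K and M' = "\<lambda>_. borel" and X = X] X_measurable
    by (auto simp: K_def V_def)
  have sum_cells: "num_points R \<omega> (A j) = (\<Sum>T\<in>{T\<in>Pow J. j \<in> T}. X (set_encode T) \<omega>)"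
    if "j \<in> J" for \<omega> j
    using J A0 that unfolding X_def
    by (simp add: num_points_eq_sum_venn_cells) (rule sum.cong[OF refl], simp add: decode_encode)
  have "(\<lambda>\<omega>. \<lambda>j\<in>J. num_points R \<omega> (A j)) = G \<circ> V"
    unfolding G_def V_def o_def by (intro ext restrict_ext) (auto simp: K_def sum_cells intro!: sum.cong)
  then have "distr M (PiM J (\<lambda>_. borel)) (\<lambda>\<omega>. \<lambda>j\<in>J. num_points R \<omega> (A j))
      = distr (distr M (PiM K (\<lambda>_. borel)) V) (PiM J (\<lambda>_. borel)) G"
    by (simp add: distr_distr[OF G_measurable V_measurable])
  then show ?thesis
    unfolding distr_cells by (simp add: K_def X_def[abs_def] G_def[abs_def])
qed

lemma PPP_distr_num_points_vector_eq:
  fixes J :: "nat set"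
  assumes P: "prob_space M" and R: "is_PPP M lam R"
    and P': "prob_space M'" and Q: "is_PPP M' lam Q" and J: "finite J"
    and A: "\<And>j. A j \<in> sets borel" and A0: "\<And>j. A j \<subseteq> {0..}"
  shows "distr M (PiM J (\<lambda>_. borel)) (\<lambda>\<omega>. \<lambda>j\<in>J. num_points R \<omega> (A j)) =
         distr M' (PiM J (\<lambda>_. borel)) (\<lambda>\<omega>. \<lambda>j\<in>J. num_points Q \<omega> (A j))"
  unfolding distr_num_points_vector_eq_sum_venn_cells[OF P R J A A0]
    distr_num_points_vector_eq_sum_venn_cells[OF P' Q J A A0]
  using PPP_distr_num_points_eq[OF P R P' Q venn_cell_sets[OF J A] venn_cell_nonneg]
  by (simp cong: PiM_cong)

lemma PPP_le_iff_num_points: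
  assumes R: "is_PPP M lam R" and \<omega>: "\<omega> \<in> space M"
  shows "R j \<omega> \<le> t \<longleftrightarrow> of_nat (Suc j) \<le> num_points R \<omega> {0..t}"
proof
  have mono: "R i \<omega> \<le> R k \<omega>" if "i \<le> k" for i k
    using PPP_incseq[OF R \<omega>] that by (simp add: incseq_def)
  show "of_nat (Suc j) \<le> num_points R \<omega> {0..t}" if "R j \<omega> \<le> t"
  proof -
    have "{..j} \<subseteq> {i. R i \<omega> \<in> {0..t}}"
      using that mono PPP_nonneg[OF R \<omega>] by (auto intro: order_trans)
    then have "emeasure (count_space UNIV) {..j} \<le> num_points R \<omega> {0..t}"
      unfolding num_points_def by (intro emeasure_mono) auto
    then show ?thesis
      by (simp add: emeasure_count_space_finite)
  qed
  show "R j \<omega> \<le> t" if "of_nat (Suc j) \<le> num_points R \<omega> {0..t}"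
  proof (rule ccontr)
    assume "\<not> R j \<omega> \<le> t"
    then have "{i. R i \<omega> \<in> {0..t}} \<subseteq> {..<j}"
      using mono[of j] by (auto simp: not_less[symmetric] intro: order.strict_trans2)
    then have "num_points R \<omega> {0..t} \<le> emeasure (count_space UNIV) {..<j}"
      unfolding num_points_def by (intro emeasure_mono) auto
    then have "num_points R \<omega> {0..t} \<le> of_nat j"
      by (simp add: emeasure_count_space_finite)
    with that have "of_nat (Suc j) \<le> (of_nat j :: ennreal)"
      by (rule order_trans)
    then show False
      by simp
  qed
qed

definition lower_orthants :: "('i \<Rightarrow> real) set set" where
  "lower_orthants = {{f. \<forall>j\<in>J. f j \<le> t j} | J t. finite J}"

lemma Int_stable_lower_orthants: "Int_stable (lower_orthants :: ('i \<Rightarrow> real) set set)"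
proof (rule Int_stableI)
  fix X Y :: "('i \<Rightarrow> real) set" assume "X \<in> lower_orthants" "Y \<in> lower_orthants"
  then obtain J t J' t' where "X = {f. \<forall>j\<in>J. f j \<le> t j}" "Y = {f. \<forall>j\<in>J'. f j \<le> t' j}"
    and "finite J" "finite J'"
    unfolding lower_orthants_def by blast
  define s where "s j = (if j \<in> J then if j \<in> J' then min (t j) (t' j) else t j else t' j)" for j
  have "X \<inter> Y = {f. \<forall>j\<in>J \<union> J'. f j \<le> s j}"
    unfolding \<open>X = _\<close> \<open>Y = _\<close> s_def by auto
  with \<open>finite J\<close> \<open>finite J'\<close> show "X \<inter> Y \<in> lower_orthants"
    unfolding lower_orthants_def by (intro CollectI exI[of _ "J \<union> J'"] exI[of _ s]) simp
qed

lemma sets_PiM_UNIV_eq_lower_orthants: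
  "sets (PiM UNIV (\<lambda>_::'i. borel :: real measure)) = sigma_sets UNIV lower_orthants"
proof
  have space: "space (PiM UNIV (\<lambda>_::'i. borel :: real measure)) = UNIV"
    by (simp add: space_PiM)
  have "lower_orthants \<subseteq> sets (PiM UNIV (\<lambda>_::'i. borel :: real measure))"
  proof
    fix X :: "('i \<Rightarrow> real) set" assume "X \<in> lower_orthants"
    then obtain J t where X: "X = {f \<in> space (PiM UNIV (\<lambda>_. borel)). \<forall>j\<in>J. f j \<le> t j}"
      and "finite J"
      unfolding lower_orthants_def space by blast
    have "{f \<in> space (PiM UNIV (\<lambda>_. borel)). \<forall>j\<in>J. f j \<le> t j} \<in> sets (PiM UNIV (\<lambda>_::'i. borel))"
      using \<open>finite J\<close> by measurable
    then show "X \<in> sets (PiM UNIV (\<lambda>_. borel))"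
      unfolding X .
  qed
  then show "sigma_sets UNIV lower_orthants \<subseteq> sets (PiM UNIV (\<lambda>_::'i. borel :: real measure))"
    using sets.sigma_sets_subset[of lower_orthants "PiM UNIV (\<lambda>_::'i. borel)"] by (simp add: space)
  have coordinate: "{f. f i \<in> B} \<in> sigma_sets UNIV lower_orthants"
    if "B \<in> sets borel" for i :: 'i and B :: "real set"
  proof -
    have "B \<in> sigma_sets UNIV (range atMost)"
      using that by (simp add: borel_eq_atMost)
    then have "(\<lambda>f. f i) -` B \<inter> UNIV
        \<in> sigma_sets UNIV {(\<lambda>f::'i \<Rightarrow> real. f i) -` A \<inter> UNIV | A. A \<in> range atMost}"
      using sigma_sets_vimage_commute[of "\<lambda>f::'i \<Rightarrow> real. f i" UNIV UNIV "range atMost"] by blast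
    also have "\<dots> \<subseteq> sigma_sets UNIV lower_orthants"
    proof (rule sigma_sets_mono')
      show "{(\<lambda>f::'i \<Rightarrow> real. f i) -` A \<inter> UNIV | A. A \<in> range atMost} \<subseteq> lower_orthants"
        unfolding lower_orthants_def
        by (auto intro!: exI[of _ "{i}"])
    qed
    finally show ?thesis
      by (simp add: vimage_def)
  qed
  show "sets (PiM UNIV (\<lambda>_::'i. borel :: real measure)) \<subseteq> sigma_sets UNIV lower_orthants"
    unfolding sets_PiM_single space[unfolded space_PiM]
    by (rule sigma_sets_mono) (auto simp: coordinate)
qed

lemma emeasure_distr_PPP_lower_orthant:
  assumes R: "is_PPP M lam R" and J: "finite J"
  shows "emeasure (distr M (PiM UNIV (\<lambda>_. borel)) (\<lambda>\<omega> i. R i \<omega>)) {f. \<forall>j\<in>J. f j \<le> t j} =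
    emeasure (distr M (PiM J (\<lambda>_. borel)) (\<lambda>\<omega>. \<lambda>j\<in>J. num_points R \<omega> {0..t j}))
      {g\<in>space (PiM J (\<lambda>_. borel)). \<forall>j\<in>J. of_nat (Suc j) \<le> g j}"
proof -
  note points = PPP_points_measurable[OF R]
  have counts: "(\<lambda>\<omega>. \<lambda>j\<in>J. num_points R \<omega> {0..t j}) \<in> measurable M (PiM J (\<lambda>_. borel))"
    using R by (intro measurable_restrict PPP_num_points_measurable) auto
  have "{f. \<forall>j\<in>J. f j \<le> t j} \<in> lower_orthants"
    using J unfolding lower_orthants_def by blast
  then have orthant: "{f. \<forall>j\<in>J. f j \<le> t j} \<in> sets (PiM UNIV (\<lambda>_. borel))"
    unfolding sets_PiM_UNIV_eq_lower_orthants by (rule sigma_sets.Basic)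
  have levels: "{g\<in>space (PiM J (\<lambda>_. borel)). \<forall>j\<in>J. of_nat (Suc j) \<le> g j}
      \<in> sets (PiM J (\<lambda>_. borel :: ennreal measure))"
    using J by measurable
  have preimages: "(\<lambda>\<omega> i. R i \<omega>) -` {f. \<forall>j\<in>J. f j \<le> t j} \<inter> space M
      = (\<lambda>\<omega>. \<lambda>j\<in>J. num_points R \<omega> {0..t j})
          -` {g\<in>space (PiM J (\<lambda>_. borel)). \<forall>j\<in>J. of_nat (Suc j) \<le> g j} \<inter> space M"
    using PPP_le_iff_num_points[OF R] by (auto simp: space_PiM)
  show ?thesis
    unfolding emeasure_distr[OF points orthant] emeasure_distr[OF counts levels] preimages ..
qed

lemma PPP_distr_points_eq:
  assumes P: "prob_space M" and R: "is_PPP M lam R"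
    and P': "prob_space M'" and Q: "is_PPP M' lam Q"
  shows "distr M (PiM UNIV (\<lambda>_. borel :: real measure)) (\<lambda>\<omega> i. R i \<omega>) =
         distr M' (PiM UNIV (\<lambda>_. borel :: real measure)) (\<lambda>\<omega> i. Q i \<omega>)"
proof (rule measure_eqI_generator_eq_countable[OF Int_stable_lower_orthants])
  fix X :: "(nat \<Rightarrow> real) set" assume "X \<in> lower_orthants"
  then obtain J t where X: "X = {f. \<forall>j\<in>J. f j \<le> t j}" and J: "finite J"
    unfolding lower_orthants_def by blast
  show "emeasure (distr M (PiM UNIV (\<lambda>_. borel)) (\<lambda>\<omega> i. R i \<omega>)) X
      = emeasure (distr M' (PiM UNIV (\<lambda>_. borel)) (\<lambda>\<omega> i. Q i \<omega>)) X"
    unfolding X emeasure_distr_PPP_lower_orthant[OF R J] emeasure_distr_PPP_lower_orthant[OF Q J]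
      PPP_distr_num_points_vector_eq[OF P R P' Q J, of "\<lambda>j. {0..t j}", simplified] ..
next
  have "UNIV = {f::nat \<Rightarrow> real. \<forall>j\<in>{}. f j \<le> 0}"
    by simp
  then show "{UNIV} \<subseteq> (lower_orthants :: (nat \<Rightarrow> real) set set)"
    unfolding lower_orthants_def by blast
  show "emeasure (distr M (PiM UNIV (\<lambda>_. borel)) (\<lambda>\<omega> i. R i \<omega>)) X \<noteq> \<infinity>"
    for X :: "(nat \<Rightarrow> real) set"
    using prob_space.prob_space_distr[OF P PPP_points_measurable[OF R]]
      finite_measure.emeasure_finite[OF prob_space.finite_measure]
    by auto
qed (simp_all add: sets_PiM_UNIV_eq_lower_orthants)

lemma CI_ratio_scale:
  assumes "0 < a" and "\<And>i. 0 \<le> R i \<omega>"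
  shows "CI_ratio eps (\<lambda>i \<omega>. R i \<omega> / a) \<omega> = CI_ratio eps R \<omega>"
proof -
  have "(R i \<omega> / a) powr (- eps) = R i \<omega> powr (- eps) * a powr eps" for i
    using assms by (simp add: powr_divide powr_minus_divide)
  then have "ennreal ((R i \<omega> / a) powr (- eps))
      = ennreal (R i \<omega> powr (- eps)) * ennreal (a powr eps)" for i
    by (simp add: ennreal_mult)
  then show ?thesis
    using \<open>0 < a\<close> unfolding CI_ratio_def by (simp add: ennreal_suminf_multc divide_mult_eq)
qed

lemma PPP_prob_CI_ratio_eq:
  assumes P: "prob_space M" and R: "is_PPP M lam R"
    and P': "prob_space M'" and Q: "is_PPP M' lam Q"
  shows "measure M {\<omega>\<in>space M. ereal x < CI_ratio eps R \<omega>}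
    = measure M' {\<omega>\<in>space M'. ereal x < CI_ratio eps Q \<omega>}"
proof -
  let ?S = "PiM UNIV (\<lambda>_. borel :: real measure)"
  let ?E = "{f\<in>space ?S. ereal x < CI_ratio eps (\<lambda>i f. f i) f}"
  have "?E \<in> sets ?S"
    unfolding CI_ratio_def by measurable
  have "measure N {\<omega>\<in>space N. ereal x < CI_ratio eps Z \<omega>} = measure (distr N ?S (\<lambda>\<omega> i. Z i \<omega>)) ?E"
    if "is_PPP N lam Z" for N :: "'c measure" and Z
  proof -
    have "measure (distr N ?S (\<lambda>\<omega> i. Z i \<omega>)) ?E = measure N ((\<lambda>\<omega> i. Z i \<omega>) -` ?E \<inter> space N)"
      using PPP_points_measurable[OF that] \<open>?E \<in> sets ?S\<close> by (rule measure_distr)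
    then show ?thesis
      by (simp add: CI_ratio_def space_PiM vimage_def Int_def conj_commute)
  qed
  from this[OF R] this[OF Q] show ?thesis
    by (simp add: PPP_distr_points_eq[OF P R P' Q])
qed

theorem corollary1:
  fixes lam :: "real \<Rightarrow> real" and eps a :: real
    and M :: "'a measure" and R :: "nat \<Rightarrow> 'a \<Rightarrow> real"
    and M' :: "'b measure" and R' :: "nat \<Rightarrow> 'b \<Rightarrow> real"
  assumes "eps > 0" and "a > 0" and "bs_density lam"
    and "prob_space M" and "is_PPP M lam R"
    and "prob_space M'" and "is_PPP M' (\<lambda>r. (1 / a) * lam (r / a)) R'"
  shows "\<forall>x::real. measure M {\<omega>\<in>space M. ereal x < CI_ratio eps R \<omega>}
                 = measure M' {\<omega>\<in>space M'. ereal x < CI_ratio eps R' \<omega>}"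
proof
  \<comment> \<open>C/I is scale invariant for every exponent.\<close>
  fix x :: real
  have "lam \<in> borel_measurable borel"
    using \<open>bs_density lam\<close> by (simp add: bs_density_def)
  with \<open>a > 0\<close> \<open>is_PPP M' _ R'\<close> have scaled: "is_PPP M' lam (\<lambda>i \<omega>. R' i \<omega> / a)"
    by (intro is_PPP_scale)
  have "measure M {\<omega>\<in>space M. ereal x < CI_ratio eps R \<omega>}
      = measure M' {\<omega>\<in>space M'. ereal x < CI_ratio eps (\<lambda>i \<omega>. R' i \<omega> / a) \<omega>}"
    using assms(4-6) scaled by (rule PPP_prob_CI_ratio_eq)
  also have "\<dots> = measure M' {\<omega>\<in>space M'. ereal x < CI_ratio eps R' \<omega>}"
    using \<open>a > 0\<close> PPP_nonneg[OF \<open>is_PPP M' _ R'\<close>]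
    by (intro arg_cong[where f = "measure M'"] Collect_cong) (auto simp: CI_ratio_scale)
  finally show "measure M {\<omega>\<in>space M. ereal x < CI_ratio eps R \<omega>}
      = measure M' {\<omega>\<in>space M'. ereal x < CI_ratio eps R' \<omega>}" .
qed

end
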